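(* Fix $y>0$ and $0\le p_1'<p_1''\le y$. Let $q_1(\cdot,\cdot)$ be APT-rationalizable, and let $\overline{p_1}$ be the minimum price $p_1\in[0,y]$ with $q_1(p_1,y)=0$. Let $F^{APT}$ be the CDF of the distribution placing probability $1-q_1(p_1',y)$ at $0$, probability $q_1(p_1',y)-q_1(p_1'',y)$ at $\overline{p_1}-p_1'$, and probability $q_1(p_1'',y)$ at $p_1''-p_1'$. Let $F^{RUM}(z)=0$ for $z<0$, $F^{RUM}(z)=1-q_1(p_1'+z,y)$ for $0\le z<p_1''-p_1'$, and $F^{RUM}(z)=1$ for $z\ge p_1''-p_1'$. Then $F^{APT}$ first-order stochastically dominates $F^{RUM}$, i.e. $F^{APT}(z)\le F^{RUM}(z)$ for all real $z$.
   Context: Two goods: good 0 (price $0$) and good 1 (price $p_1\ge0$); consumers have common income $y>0$, choose one good and spend the rest on a numeraire; $q_1(p_1,y)$ is the population probability of choosing good 1, defined for $y>0$, $p_1\in[0,y]$. $q_1$ is APT-rationalizable if there exist $U_0:(0,\infty)\to[0,\infty)$ strictly increasing, $U_1:[0,\infty)\to[0,\infty)$ continuous and strictly increasing, with: for every $y>0$ some $\bar p_1\in[0,y]$ has $U_0(y)\ge U_1(y-\bar p_1)$; and a CDF $G$ of attention thresholds with $G(0)=0$, such that $q_{1}(p_{1},y)=\mathbb{1}\{U_{0}(y)<U_{1}(y-p_{1})\}\,(1-G(p_{1}))$. (In the paper, $F^{APT}$ is the distribution of equivalent variation of the price increase from $p_1'$ to $p_1''$ identified under this model when additionally $G(t)<1$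 for all finite $t$, and $F^{RUM}$ is the distribution of equivalent variation identified under a random utility model with full attention, both from observing $q_1(p_1,y)$ for all $p_1\in[p_1',y]$.) *)

theory Defs
  imports "HOL-Analysis.Analysis"
begin

definition is_cdf :: "(real \<Rightarrow> real) \<Rightarrow> bool" where
  "is_cdf G \<longleftrightarrow> mono G \<and> (\<forall>x. continuous (at_right x) G)
      \<and> (G \<longlongrightarrow> 0) at_bot \<and> (G \<longlongrightarrow> 1) at_top"

text \<open>APT-rationalizability of the choice probability q1 (arguments: price p1, income y).
  q1 is only constrained on y > 0, p1 in [0,y].\<close>
definition APT_rationalizable :: "(real \<Rightarrow> real \<Rightarrow> real) \<Rightarrow> bool" where
  "APT_rationalizable q1 \<longleftrightarrow>
     (\<exists>(U0::real\<Rightarrow>real) (U1::real\<Rightarrow>real) (G::real\<Rightarrow>real).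
        (\<forall>y::real>0. U0 y \<ge> 0) \<and> strict_mono_on {0::real<..} U0 \<and>
        (\<forall>x\<ge>0. U1 x \<ge> 0) \<and> continuous_on {0::real..} U1 \<and> strict_mono_on {0::real..} U1 \<and>
        (\<forall>y>0. \<exists>pb\<in>{0..y}. U0 y \<ge> U1 (y - pb)) \<and>
        is_cdf G \<and> G 0 = 0 \<and>
        (\<forall>y>0. \<forall>p1\<in>{0..y}.
            q1 p1 y = (if U0 y < U1 (y - p1) then (1::real) else 0) * (1 - G p1)))"

definition F_APT :: "(real \<Rightarrow> real \<Rightarrow> real) \<Rightarrow> real \<Rightarrow> real \<Rightarrow> real \<Rightarrow> real \<Rightarrow> real \<Rightarrow> real" where
  "F_APT q1 y p' p'' pbar z =
     (if 0 \<le> z then 1 - q1 p' y else 0)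
   + (if pbar - p' \<le> z then q1 p' y - q1 p'' y else 0)
   + (if p'' - p' \<le> z then q1 p'' y else 0)"

definition F_RUM :: "(real \<Rightarrow> real \<Rightarrow> real) \<Rightarrow> real \<Rightarrow> real \<Rightarrow> real \<Rightarrow> real \<Rightarrow> real" where
  "F_RUM q1 y p' p'' z =
     (if z < 0 then 0 else if z < p'' - p' then 1 - q1 (p' + z) y else 1)"

end

theory Submission
  imports Defs
begin

text \<open>Under APT the choice probability at a fixed income is an indicator that is antitone in the
  price (the utility of good 1 falls as its price rises) times the nonnegative antitone function
  \<open>1 - G\<close>; hence it is nonnegative and antitone in the price, so it vanishes from its zero \<open>pbar\<close> on.
  Comparing the two CDFs case by case on \<open>z\<close>: below \<open>pbar - p'\<close> the APT distribution carries
  the mass \<open>1 - q1(p')\<close> where RUM carries \<open>1 - q1(p' + z) \<ge> 1 - q1(p')\<close>; from \<open>pbar - p'\<close> on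
  RUM has already reached \<open>1\<close> while APT still misses the mass \<open>q1(p'') \<ge> 0\<close>.\<close>

lemma is_cdf_le_1:
  assumes "is_cdf G"
  shows "G x \<le> 1"
proof -
  have mono: "mono G" and lim: "(G \<longlongrightarrow> 1) at_top"
    using assms unfolding is_cdf_def by auto
  have "eventually (\<lambda>t. G x \<le> G t) at_top"
    using eventually_ge_at_top[of x] by eventually_elim (use mono in \<open>simp add: monoD\<close>)
  from tendsto_le[OF trivial_limit_at_top_linorder lim tendsto_const this] show ?thesis .
qed

lemma antimono_on_mult_survival:
  fixes a G :: "real \<Rightarrow> real"
  assumes G: "is_cdf G" and a: "antimono_on A a" "\<And>p. 0 \<le> a p"
  shows "antimono_on A (\<lambda>p. a p * (1 - G p))"
proof (rule monotone_onI)
  fix p p'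
  assume p: "p \<in> A" "p' \<in> A" "p \<le> p'"
  have "a p' \<le> a p"
    using monotone_onD[OF a(1) p] by simp
  moreover have "G p \<le> G p'"
    using G p(3) unfolding is_cdf_def by (simp add: monoD)
  moreover have "G p' \<le> 1"
    using is_cdf_le_1[OF G] .
  ultimately show "a p' * (1 - G p') \<le> a p * (1 - G p)"
    using a(2)[of p'] by (intro mult_mono) auto
qed

lemma APT_choice_prob_antimono_nonneg:
  assumes "APT_rationalizable q1" "y > 0"
  shows "antimono_on {0..y} (\<lambda>p. q1 p y)" and "p \<in> {0..y} \<Longrightarrow> 0 \<le> q1 p y"
proof -
  obtain U0 U1 G :: "real \<Rightarrow> real" where
    U1: "strict_mono_on {0..} U1" and G: "is_cdf G" and
    q: "\<forall>y>0. \<forall>p\<in>{0..y}. q1 p y = (if U0 y < U1 (y - p) then 1 else 0) * (1 - G p)"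
    using assms(1) unfolding APT_rationalizable_def by blast
  define a where "a p = (if U0 y < U1 (y - p) then 1 else (0::real))" for p
  have q_eq: "q1 p y = a p * (1 - G p)" if "p \<in> {0..y}" for p
    using q assms(2) that unfolding a_def by blast
  have "antimono_on {0..y} a"
  proof (rule monotone_onI)
    fix p p' :: real
    assume "p \<in> {0..y}" "p' \<in> {0..y}" "p \<le> p'"
    then have "U1 (y - p') \<le> U1 (y - p)"
      by (intro strict_mono_on_leD[OF U1]) auto
    then show "a p' \<le> a p"
      unfolding a_def by auto
  qed
  then have "antimono_on {0..y} (\<lambda>p. a p * (1 - G p))"
    by (rule antimono_on_mult_survival[OF G]) (simp add: a_def)
  then show "antimono_on {0..y} (\<lambda>p. q1 p y)"
    by (simp add: monotone_on_def q_eq)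
  show "0 \<le> q1 p y" if "p \<in> {0..y}"
    using is_cdf_le_1[OF G, of p] q_eq[OF that] by (simp add: a_def)
qed

lemma antimono_on_nonneg_zero_beyond:
  fixes f :: "'a::order \<Rightarrow> 'b::{order, zero}"
  assumes "antimono_on A f" "\<And>p. p \<in> A \<Longrightarrow> 0 \<le> f p"
    and "p\<^sub>0 \<in> A" "f p\<^sub>0 = 0" "p \<in> A" "p\<^sub>0 \<le> p"
  shows "f p = 0"
proof -
  have "f p \<le> f p\<^sub>0"
    using monotone_onD[OF assms(1,3,5,6)] .
  then show ?thesis
    using assms(2)[OF assms(5)] assms(4) by (simp add: order_antisym)
qed

lemma F_APT_le_F_RUM:
  assumes anti: "antimono_on {0..y} (\<lambda>p. q1 p y)"
    and nonneg: "\<And>p. p \<in> {0..y} \<Longrightarrow> 0 \<le> q1 p y"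
    and "0 \<le> p'" "p' < p''" "p'' \<le> y" "pbar \<in> {0..y}" "q1 pbar y = 0"
  shows "F_APT q1 y p' p'' pbar z \<le> F_RUM q1 y p' p'' z"
proof -
  have zero: "q1 p y = 0" if "p \<in> {pbar..y}" for p
    using antimono_on_nonneg_zero_beyond[OF anti nonneg assms(6,7)] assms(6) that by simp
  have q'': "0 \<le> q1 p'' y" "q1 p'' y \<le> q1 p' y"
    using nonneg monotone_onD[OF anti, of p' p''] assms(3-5) by auto
  consider "z < 0" | "0 \<le> z" "z < p'' - p'" | "p'' - p' \<le> z"
    by linarith
  then show ?thesis
  proof cases
    case 1
    then have "pbar - p' \<le> z \<Longrightarrow> q1 p' y = 0 \<and> q1 p'' y = 0"
      using zero[of p'] zero[of p''] assms(3-6) by auto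
    with 1 show ?thesis
      using assms(4) unfolding F_APT_def F_RUM_def by auto
  next
    case 2
    have "q1 (p' + z) y \<le> q1 p' y"
      using monotone_onD[OF anti, of p' "p' + z"] 2 assms(3-5) by auto
    moreover have "pbar - p' \<le> z \<Longrightarrow> q1 (p' + z) y = 0"
      using zero[of "p' + z"] 2 assms(3-5) by auto
    ultimately show ?thesis
      using 2 q'' unfolding F_APT_def F_RUM_def by auto
  next
    case 3
    then show ?thesis
      using q'' assms(3,4) unfolding F_APT_def F_RUM_def by auto
  qed
qed

theorem theorem5:
  fixes q1 :: "real \<Rightarrow> real \<Rightarrow> real" and y p' p'' pbar :: real
  assumes "y > 0" and "0 \<le> p'" and "p' < p''" and "p'' \<le> y"
    and "APT_rationalizable q1"
    and "pbar \<in> {0..y}" and "q1 pbar y = 0"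
    and "\<forall>p\<in>{0..y}. q1 p y = 0 \<longrightarrow> pbar \<le> p"
  shows "\<forall>z::real. F_APT q1 y p' p'' pbar z \<le> F_RUM q1 y p' p'' z"
  using F_APT_le_F_RUM[of y q1, OF APT_choice_prob_antimono_nonneg[OF assms(5,1)] assms(2-4,6,7)]
  by blast

end
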